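(* Let $(Y_1,\dots,Y_N)$ be multinomially distributed with $2N$ trials and $N$ categories each of probability $1/N$, and consider the random degree sequence $(d_i^-,d_i^+)_{i\in[N]}$ with $d_i^-=Y_i$ and $d_i^+=2$. Then there is a constant $K>0$ such that $$\mathbb{P}\{(d_i^-,d_i^+)_{i\in[N]}\text{ is proper}\}\to1\quad\text{as }N\to\infty.$$
   Context: For a degree sequence $(d_i^-,d_i^+)_{i\in[N]}$ with $d_i^+=2$ for all $i$, let $\xi_k^N=\frac1N\#\{i: d_i^-=k\}$ and let $\Delta^N$ be the maximal in- or out-degree. Such a sequence is called proper (with constant $K>0$, not depending on $N$) if (C1) $\sum_{k}k^2\xi_k^N\le K$ and (C2) $\Delta^N\le N^{1/12}/\log N$. *)

theory Defs
  imports "HOL-Probability.Probability"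
begin

text \<open>Multinomial distribution with 2N trials and N equiprobable categories,
realised as the law of the occupation counts of 2N balls thrown independently
and uniformly into the N bins 0..N-1. The result is a count vector
Y :: nat => nat (Y i = number of balls in bin i, for i < N; Y i = 0 otherwise).\<close>
definition multinomial_2N :: "nat \<Rightarrow> (nat \<Rightarrow> nat) pmf" where
  "multinomial_2N N =
     map_pmf (\<lambda>f i. card {j \<in> {0..<2*N}. f j = i})
       (pmf_of_set (PiE {0..<2*N} (\<lambda>_. {0..<N})))"

definition xi :: "nat \<Rightarrow> (nat \<Rightarrow> nat) \<Rightarrow> nat \<Rightarrow> real" where
  "xi N din k = real (card {i \<in> {0..<N}. din i = k}) / real N"

definition maxdeg :: "nat \<Rightarrow> (nat \<Rightarrow> nat) \<Rightarrow> (nat \<Rightarrow> nat) \<Rightarrow> nat" where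
  "maxdeg N din dout = Max (din ` {0..<N} \<union> dout ` {0..<N} \<union> {0})"

text \<open>Properness with constant K: (C1) sum_k k^2 xi_k <= K (the sum ranges over
the finitely many k with xi_k possibly nonzero), (C2) Delta <= N^(1/12)/log N.\<close>
definition proper :: "real \<Rightarrow> nat \<Rightarrow> (nat \<Rightarrow> nat) \<Rightarrow> (nat \<Rightarrow> nat) \<Rightarrow> bool" where
  "proper K N din dout \<longleftrightarrow>
     (\<Sum>k\<in>din ` {0..<N}. real k ^ 2 * xi N din k) \<le> K \<and>
     real (maxdeg N din dout) \<le> real N powr (1/12) / ln (real N)"

end

theory Submission
  imports Defs "HOL-Real_Asymp.Real_Asymp"
begin

(*
  Throw 2N balls independently and uniformly into N bins and let Y be the occupancy vector.
  Condition (C1) amounts to \<Sum> Y_i^2 = O(N). Since \<Sum> Y_i^2 = 2N + D, where D counts the ordered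
  pairs of distinct balls landing in the same bin, it suffices that D stays within N of its mean
  2(2N-1); each pair collides with probability 1/N and two different pairs collide jointly with
  probability 1/N^2 (or 1/N if one is the reverse of the other), so Var D \<le> 2 E D \<le> 8N and
  Chebyshev bounds the failure probability by 8/N. Condition (C2) fails only if some bin receives
  m > x = N^(1/12)/log N balls, which by a union bound over bins and m-sets of balls has
  probability at most N binom(2N,m) N^(-m) \<le> N 2^m/m! \<le> 16N/2^x \<longrightarrow> 0.
*)

definition off_diagonal :: "'a set \<Rightarrow> ('a \<times> 'a) set" where
  "off_diagonal I = {p \<in> I \<times> I. fst p \<noteq> snd p}"

definition collisions :: "'a set \<Rightarrow> ('a \<Rightarrow> 'b) \<Rightarrow> real" where
  "collisions I f = (\<Sum>p\<in>off_diagonal I. of_bool (f (fst p) = f (snd p)))"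

definition occupancy :: "'a set \<Rightarrow> ('a \<Rightarrow> 'b) \<Rightarrow> 'b \<Rightarrow> nat" where
  "occupancy I f x = card {j \<in> I. f j = x}"

lemma finite_off_diagonal [simp]: "finite I \<Longrightarrow> finite (off_diagonal I)"
  by (simp add: off_diagonal_def)

lemma card_off_diagonal_le: "finite I \<Longrightarrow> card (off_diagonal I) \<le> card I ^ 2"
  unfolding off_diagonal_def power2_eq_square card_cartesian_product[symmetric]
  by (rule card_mono) auto

lemma swap_in_off_diagonal: "p \<in> off_diagonal I \<Longrightarrow> prod.swap p \<in> off_diagonal I \<and> prod.swap p \<noteq> p"
  by (cases p) (auto simp: off_diagonal_def)

lemma card_eq_sum_card_fibres:
  assumes "finite S" "finite T" "g ` S \<subseteq> T"
  shows "card S = (\<Sum>y\<in>T. card {x \<in> S. g x = y})"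
  using sum.group[OF assms, of "\<lambda>_. 1 :: nat"] by simp

lemma card_upper_deviation_le:
  fixes g :: "'a \<Rightarrow> real"
  assumes "finite S" "t \<ge> 0"
  shows "real (card {x \<in> S. \<mu> + t \<le> g x}) * t ^ 2 \<le> (\<Sum>x\<in>S. (g x - \<mu>) ^ 2)"
proof -
  have "real (card {x \<in> S. \<mu> + t \<le> g x}) * t ^ 2 = (\<Sum>x\<in>{x \<in> S. \<mu> + t \<le> g x}. t ^ 2)"
    by simp
  also have "\<dots> \<le> (\<Sum>x\<in>{x \<in> S. \<mu> + t \<le> g x}. (g x - \<mu>) ^ 2)"
    using assms(2) by (intro sum_mono power_mono) auto
  also have "\<dots> \<le> (\<Sum>x\<in>S. (g x - \<mu>) ^ 2)"
    using assms(1) by (intro sum_mono2) auto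
  finally show ?thesis .
qed

locale balls_in_bins =
  fixes I :: "'a set" and A :: "'b set"
  assumes finite_balls: "finite I" and finite_bins: "finite A"
begin

abbreviation placements :: "('a \<Rightarrow> 'b) set" where
  "placements \<equiv> PiE I (\<lambda>_. A)"

lemma finite_placements: "finite placements"
  using finite_balls finite_bins by (simp add: finite_PiE)

lemma card_placements: "card placements = card A ^ card I"
  using finite_balls by (simp add: card_PiE)

lemma placement_update: "f \<in> placements \<Longrightarrow> a \<in> I \<Longrightarrow> y \<in> A \<Longrightarrow> f(a := y) \<in> placements"
  using PiE_fun_upd[of y "\<lambda>_. A" a f I] by (simp add: insert_absorb)

lemma card_filter_fix_coordinate:
  assumes a: "a \<in> I" and x: "x \<in> A"
    and inv: "\<And>f y. f \<in> placements \<Longrightarrow> y \<in> A \<Longrightarrow> Q (f(a := y)) = Q f"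
  shows "card {f \<in> placements. Q f} = card A * card {f \<in> placements. Q f \<and> f a = x}"
proof -
  have same: "card {f \<in> placements. Q f \<and> f a = y} = card {f \<in> placements. Q f \<and> f a = x}"
    if y: "y \<in> A" for y
  proof (rule bij_betw_same_card[of "\<lambda>f. f(a := x)"], rule bij_betw_byWitness[of _ "\<lambda>f. f(a := y)"])
    show "(\<lambda>f. f(a := x)) ` {f \<in> placements. Q f \<and> f a = y} \<subseteq> {f \<in> placements. Q f \<and> f a = x}"
      using placement_update inv a x by auto
    show "(\<lambda>f. f(a := y)) ` {f \<in> placements. Q f \<and> f a = x} \<subseteq> {f \<in> placements. Q f \<and> f a = y}"
      using placement_update inv a y by auto
  qed auto
  have "card {f \<in> placements. Q f} = (\<Sum>y\<in>A. card {f \<in> {f \<in> placements. Q f}. f a = y})"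
    using finite_placements finite_bins a by (intro card_eq_sum_card_fibres) auto
  also have "\<dots> = (\<Sum>y\<in>A. card {f \<in> placements. Q f \<and> f a = x})"
    by (intro sum.cong refl) (simp add: same[symmetric] conj_assoc)
  finally show ?thesis by simp
qed

lemma card_filter_collision:
  assumes ab: "a \<in> I" "b \<in> I" "a \<noteq> b"
    and inv: "\<And>f y. f \<in> placements \<Longrightarrow> y \<in> A \<Longrightarrow> Q (f(a := y)) = Q f"
  shows "card A * card {f \<in> placements. Q f \<and> f a = f b} = card {f \<in> placements. Q f}"
proof -
  have fibre: "{f \<in> {f \<in> placements. Q f \<and> f a = f b}. f b = y}
      = {f \<in> placements. (Q f \<and> f b = y) \<and> f a = y}" for y
    by auto
  have "card {f \<in> placements. Q f \<and> f a = f b}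
      = (\<Sum>y\<in>A. card {f \<in> {f \<in> placements. Q f \<and> f a = f b}. f b = y})"
    using finite_placements finite_bins ab by (intro card_eq_sum_card_fibres) auto
  then have "card A * card {f \<in> placements. Q f \<and> f a = f b}
      = (\<Sum>y\<in>A. card A * card {f \<in> placements. (Q f \<and> f b = y) \<and> f a = y})"
    by (simp only: fibre sum_distrib_left)
  also have "\<dots> = (\<Sum>y\<in>A. card {f \<in> {f \<in> placements. Q f}. f b = y})"
    by (intro sum.cong refl, subst card_filter_fix_coordinate[symmetric]) (use ab inv in auto)
  also have "\<dots> = card {f \<in> placements. Q f}"
    using finite_placements finite_bins ab
    by (intro card_eq_sum_card_fibres[symmetric]) auto
  finally show ?thesis .
qed

lemma card_collision:
  assumes "p \<in> off_diagonal I"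
  shows "card A * card {f \<in> placements. f (fst p) = f (snd p)} = card placements"
  using card_filter_collision[of "fst p" "snd p" "\<lambda>_. True"] assms
  unfolding off_diagonal_def by auto

lemma card_two_collisions:
  assumes p: "p \<in> off_diagonal I" and q: "q \<in> off_diagonal I" "q \<noteq> p" "q \<noteq> prod.swap p"
  shows "card A ^ 2 * card {f \<in> placements. f (fst p) = f (snd p) \<and> f (fst q) = f (snd q)}
    = card placements"
proof -
  obtain a b c d where pq: "p = (a, b)" "q = (c, d)" by force
  \<comment> \<open>an endpoint of q outside p can be moved freely without affecting the collision of p\<close>
  have "c \<notin> {a, b} \<or> d \<notin> {a, b}"
    using p q pq by (auto simp: off_diagonal_def)
  then have "card A * card {f \<in> placements. f a = f b \<and> f c = f d} = card {f \<in> placements. f a = f b}"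
  proof
    assume "c \<notin> {a, b}"
    then show ?thesis
      using q pq by (intro card_filter_collision) (auto simp: off_diagonal_def)
  next
    assume "d \<notin> {a, b}"
    then have "card A * card {f \<in> placements. f a = f b \<and> f d = f c} = card {f \<in> placements. f a = f b}"
      using q pq by (intro card_filter_collision) (auto simp: off_diagonal_def)
    then show ?thesis
      by (simp add: eq_commute[of "_ c"])
  qed
  then show ?thesis
    using card_collision[OF p] pq by (simp add: power2_eq_square mult.assoc)
qed

lemma card_constant_on:
  assumes T: "T \<subseteq> I" and x: "x \<in> A"
  shows "card A ^ card T * card {f \<in> placements. \<forall>j\<in>T. f j = x} = card placements"
proof -
  have "{f \<in> placements. \<forall>j\<in>T. f j = x} = PiE I (\<lambda>j. if j \<in> T then {x} else A)"
  proof (intro equalityI subsetI)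
    fix f assume "f \<in> PiE I (\<lambda>j. if j \<in> T then {x} else A)"
    then show "f \<in> {f \<in> placements. \<forall>j\<in>T. f j = x}"
      using T x by (auto simp: PiE_iff split: if_split_asm)
  qed (use T x in \<open>auto simp: PiE_iff\<close>)
  then have "card {f \<in> placements. \<forall>j\<in>T. f j = x} = card A ^ card (I - T)"
    using finite_balls by (simp add: card_PiE if_distrib[of card] prod.If_cases Diff_eq)
  moreover have "card T + card (I - T) = card I"
    using finite_balls T by (metis card_Diff_subset finite_subset le_add_diff_inverse card_mono)
  ultimately show ?thesis
    by (simp add: card_placements flip: power_add)
qed

lemma sum_of_bool_placements:
  "(\<Sum>f\<in>placements. of_bool (Q f) :: real) = real (card {f \<in> placements. Q f})"
  using finite_placements by (simp add: Int_def)

lemma sum_collisions: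
  "card A * (\<Sum>f\<in>placements. collisions I f) = card (off_diagonal I) * card placements"
proof -
  have "(\<Sum>f\<in>placements. collisions I f)
      = (\<Sum>p\<in>off_diagonal I. real (card {f \<in> placements. f (fst p) = f (snd p)}))"
    unfolding collisions_def by (subst sum.swap) (simp only: sum_of_bool_placements)
  then have "card A * (\<Sum>f\<in>placements. collisions I f)
      = (\<Sum>p\<in>off_diagonal I. real (card A * card {f \<in> placements. f (fst p) = f (snd p)}))"
    by (simp add: sum_distrib_left)
  also have "\<dots> = (\<Sum>p\<in>off_diagonal I. real (card placements))"
    by (intro sum.cong refl) (simp only: card_collision)
  finally show ?thesis by simp
qed

lemma sum_card_two_collisions:
  assumes p: "p \<in> off_diagonal I"
  shows "card A ^ 2 * (\<Sum>q\<in>off_diagonal I.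
           real (card {f \<in> placements. f (fst p) = f (snd p) \<and> f (fst q) = f (snd q)}))
    = (2 * real (card A) + real (card (off_diagonal I)) - 2) * card placements"
proof -
  define P where "P = off_diagonal I"
  define g where "g q = real (card A ^ 2 * card {f \<in> placements. f (fst p) = f (snd p) \<and> f (fst q) = f (snd q)})" for q
  have p': "p \<in> P" "prod.swap p \<in> P - {p}"
    using p swap_in_off_diagonal[OF p] by (auto simp: P_def)
  have finP: "finite P"
    using finite_balls by (simp add: P_def)
  have diagonal: "g q = card A * card placements" if "q = p \<or> q = prod.swap p" for q
  proof -
    have "{f \<in> placements. f (fst p) = f (snd p) \<and> f (fst q) = f (snd q)}
        = {f \<in> placements. f (fst p) = f (snd p)}"
      using that by auto
    then show ?thesis
      using card_collision[OF p] by (simp add: g_def power2_eq_square mult.assoc)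
  qed
  have "sum g P = g p + g (prod.swap p) + sum g (P - {p} - {prod.swap p})"
    using finP p' by (simp add: sum.remove)
  also have "sum g (P - {p} - {prod.swap p}) = (\<Sum>q\<in>P - {p} - {prod.swap p}. real (card placements))"
    by (intro sum.cong refl) (use card_two_collisions p in \<open>auto simp: g_def P_def\<close>)
  also have "\<dots> = (real (card P) - 2) * card placements"
  proof -
    have "{p, prod.swap p} \<subseteq> P" and two: "card {p, prod.swap p} = 2"
      using p' by auto
    then have "2 \<le> card P"
      using card_mono[OF finP] by metis
    then show ?thesis
      using finP \<open>{p, prod.swap p} \<subseteq> P\<close> two
      by (simp add: Diff_insert2[symmetric] card_Diff_subset of_nat_diff)
  qed
  finally have "sum g P = 2 * card A * card placements + (real (card P) - 2) * card placements"
    using diagonal by simp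
  then show ?thesis
    by (simp add: P_def g_def sum_distrib_left algebra_simps)
qed

lemma sum_collisions_squared:
  "card A ^ 2 * (\<Sum>f\<in>placements. collisions I f ^ 2)
    = card (off_diagonal I) * (2 * real (card A) + real (card (off_diagonal I)) - 2) * card placements"
proof -
  let ?c = "\<lambda>f p q. of_bool (f (fst p) = f (snd p) \<and> f (fst q) = f (snd q)) :: real"
  have "(\<Sum>f\<in>placements. collisions I f ^ 2)
      = (\<Sum>f\<in>placements. \<Sum>p\<in>off_diagonal I. \<Sum>q\<in>off_diagonal I. ?c f p q)"
    by (simp add: collisions_def power2_eq_square sum_product of_bool_conj)
  also have "\<dots> = (\<Sum>p\<in>off_diagonal I. \<Sum>q\<in>off_diagonal I. \<Sum>f\<in>placements. ?c f p q)"
    by (subst sum.swap) (intro sum.cong refl sum.swap)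
  finally have "card A ^ 2 * (\<Sum>f\<in>placements. collisions I f ^ 2)
      = (\<Sum>p\<in>off_diagonal I. card A ^ 2 * (\<Sum>q\<in>off_diagonal I.
           real (card {f \<in> placements. f (fst p) = f (snd p) \<and> f (fst q) = f (snd q)})))"
    by (simp only: sum_of_bool_placements sum_distrib_left)
  also have "\<dots> = (\<Sum>p\<in>off_diagonal I.
      (2 * real (card A) + real (card (off_diagonal I)) - 2) * card placements)"
    by (intro sum.cong refl sum_card_two_collisions)
  finally show ?thesis
    by simp
qed

lemma sum_collisions_deviation_squared:
  assumes "A \<noteq> {}"
  defines "M \<equiv> real (card (off_diagonal I))"
  shows "(\<Sum>f\<in>placements. (collisions I f - M / card A) ^ 2) \<le> 2 * M * card placements / card A"
proof -
  define n where "n = real (card A)"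
  have n: "n > 0"
    using assms finite_bins by (simp add: n_def card_gt_0_iff)
  have S1: "(\<Sum>f\<in>placements. collisions I f) = M * card placements / n"
    using sum_collisions n by (simp add: M_def n_def field_simps)
  have S2: "(\<Sum>f\<in>placements. collisions I f ^ 2) = M * (2 * n + M - 2) * card placements / n ^ 2"
    using sum_collisions_squared n by (simp add: M_def n_def field_simps)
  have "(\<Sum>f\<in>placements. (collisions I f - M / n) ^ 2)
      = (\<Sum>f\<in>placements. collisions I f ^ 2 - 2 * (M / n) * collisions I f + (M / n) ^ 2)"
    by (intro sum.cong refl) (simp add: power2_diff algebra_simps)
  also have "\<dots> = (\<Sum>f\<in>placements. collisions I f ^ 2) - 2 * (M / n) * (\<Sum>f\<in>placements. collisions I f)
        + (M / n) ^ 2 * card placements"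
    by (simp add: sum.distrib sum_subtractf sum_distrib_left)
  also have "\<dots> = 2 * M * card placements / n - 2 * M * card placements / n ^ 2"
    unfolding S1 S2 using n by (simp add: field_simps power2_eq_square)
  also have "\<dots> \<le> 2 * M * card placements / n"
    by (simp add: M_def n_def)
  finally show ?thesis
    by (simp add: n_def)
qed

lemma sum_occupancy_squared:
  assumes f: "f \<in> placements"
  shows "(\<Sum>x\<in>A. real (occupancy I f x) ^ 2) = card I + collisions I f"
proof -
  have occupancy: "real (occupancy I f x) = (\<Sum>a\<in>I. of_bool (f a = x))" for x
    using finite_balls by (simp add: occupancy_def Int_def)
  have "(\<Sum>x\<in>A. real (occupancy I f x) ^ 2)
      = (\<Sum>x\<in>A. \<Sum>a\<in>I. \<Sum>b\<in>I. of_bool (f a = x) * of_bool (f b = x))"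
    by (simp add: occupancy power2_eq_square sum_product)
  also have "\<dots> = (\<Sum>a\<in>I. \<Sum>b\<in>I. \<Sum>x\<in>A. of_bool (f a = x) * of_bool (f b = x))"
    by (subst sum.swap) (intro sum.cong refl sum.swap)
  also have "\<dots> = (\<Sum>a\<in>I. \<Sum>b\<in>I. of_bool (f a = f b))"
  proof (intro sum.cong refl)
    fix a assume "a \<in> I"
    then have "f a \<in> A"
      by (rule PiE_mem[OF f])
    have "(\<Sum>x\<in>A. of_bool (f a = x) * of_bool (f b = x))
        = (\<Sum>x\<in>A. if x = f a then of_bool (f b = f a) else 0 :: real)" for b
      by (rule sum.cong) auto
    then show "(\<Sum>x\<in>A. of_bool (f a = x) * of_bool (f b = x)) = (of_bool (f a = f b) :: real)" for b
      using finite_bins \<open>f a \<in> A\<close> by (auto simp: sum.delta')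
  qed
  also have "\<dots> = (\<Sum>a\<in>I. 1 + (\<Sum>b\<in>I - {a}. of_bool (f a = f b)))"
  proof (intro sum.cong refl)
    fix a assume "a \<in> I"
    then show "(\<Sum>b\<in>I. of_bool (f a = f b)) = (1::real) + (\<Sum>b\<in>I - {a}. of_bool (f a = f b))"
      using sum.remove[OF finite_balls, of a "\<lambda>b. of_bool (f a = f b) :: real"] by simp
  qed
  also have "\<dots> = real (card I) + (\<Sum>(a, b)\<in>Sigma I (\<lambda>a. I - {a}). of_bool (f a = f b))"
    using finite_balls by (simp add: sum.distrib sum.Sigma del: sum_of_bool_eq)
  also have "Sigma I (\<lambda>a. I - {a}) = off_diagonal I"
    by (auto simp: off_diagonal_def)
  finally show ?thesis
    by (simp add: collisions_def case_prod_beta)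
qed

lemma card_overfull_bin:
  "card {f \<in> placements. \<exists>x\<in>A. m \<le> occupancy I f x} * card A ^ m
    \<le> card A * (card I choose m) * card placements"
proof -
  let ?T = "{T. T \<subseteq> I \<and> card T = m}"
  let ?E = "\<lambda>x T. {f \<in> placements. \<forall>j\<in>T. f j = x}"
  have "{f \<in> placements. \<exists>x\<in>A. m \<le> occupancy I f x} \<subseteq> (\<Union>x\<in>A. \<Union>T\<in>?T. ?E x T)"
  proof
    fix f assume "f \<in> {f \<in> placements. \<exists>x\<in>A. m \<le> occupancy I f x}"
    then obtain x where f: "f \<in> placements" and x: "x \<in> A" and m: "m \<le> card {j \<in> I. f j = x}"
      by (auto simp: occupancy_def)
    obtain T where "T \<subseteq> {j \<in> I. f j = x}" "card T = m"
      using obtain_subset_with_card_n[OF m] by metis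
    then show "f \<in> (\<Union>x\<in>A. \<Union>T\<in>?T. ?E x T)"
      using f x by blast
  qed
  then have "card {f \<in> placements. \<exists>x\<in>A. m \<le> occupancy I f x} \<le> card (\<Union>x\<in>A. \<Union>T\<in>?T. ?E x T)"
    using finite_placements finite_bins finite_balls by (intro card_mono) auto
  also have "\<dots> \<le> (\<Sum>x\<in>A. card (\<Union>T\<in>?T. ?E x T))"
    by (rule card_UN_le[OF finite_bins])
  also have "\<dots> \<le> (\<Sum>x\<in>A. \<Sum>T\<in>?T. card (?E x T))"
    using finite_balls by (intro sum_mono card_UN_le) simp
  finally have "card {f \<in> placements. \<exists>x\<in>A. m \<le> occupancy I f x} * card A ^ m
      \<le> (\<Sum>x\<in>A. \<Sum>T\<in>?T. card (?E x T)) * card A ^ m"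
    by (rule mult_right_mono) simp
  also have "\<dots> = (\<Sum>x\<in>A. \<Sum>T\<in>?T. card A ^ card T * card (?E x T))"
    unfolding sum_distrib_right by (intro sum.cong refl) (simp add: mult.commute)
  also have "\<dots> = (\<Sum>x\<in>A. \<Sum>T\<in>?T. card placements)"
    by (intro sum.cong refl) (metis (mono_tags) card_constant_on mem_Collect_eq)
  also have "\<dots> = card A * (card I choose m) * card placements"
    using n_subsets[OF finite_balls] by simp
  finally show ?thesis .
qed

end

lemma power_four_le_fact: "(4::real) ^ m \<le> 16 * fact m"
proof (induction m)
  case (Suc m)
  show ?case
  proof (cases "m \<le> 2")
    case True
    then have "m = 0 \<or> m = 1 \<or> m = 2"
      by auto
    then show ?thesis
      by (auto simp: fact_numeral)
  next
    case False
    have "(4::real) ^ Suc m \<le> 4 * (16 * fact m)"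
      using Suc by simp
    also have "\<dots> \<le> real (Suc m) * (16 * fact m)"
      using False by (intro mult_right_mono) auto
    finally show ?thesis
      by (simp add: fact_Suc)
  qed
qed simp

lemma power_two_div_fact_le: "(2::real) ^ m / fact m \<le> 16 / 2 ^ m"
  using power_four_le_fact[of m]
  by (simp add: divide_simps flip: power_mult_distrib)

lemma binomial_le_power_div_fact: "real (n choose m) \<le> real n ^ m / fact m"
  using binomial_fact_pow[of n m]
  by (simp add: field_simps) (metis of_nat_fact of_nat_le_iff of_nat_mult of_nat_power)

lemma card_overfull_bin_2N:
  fixes N :: nat
  assumes "N > 0"
  defines "F \<equiv> PiE {0..<2*N} (\<lambda>_. {0..<N})"
  shows "real (card {f \<in> F. \<exists>x\<in>{0..<N}. m \<le> occupancy {0..<2*N} f x})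
    \<le> 16 * real N / 2 ^ m * card F"
proof -
  interpret balls_in_bins "{0..<2*N}" "{0..<N}"
    by unfold_locales simp_all
  let ?B = "{f \<in> F. \<exists>x\<in>{0..<N}. m \<le> occupancy {0..<2*N} f x}"
  have "card ?B * N ^ m \<le> N * ((2 * N) choose m) * card F"
    using card_overfull_bin[of m] by (simp add: F_def)
  then have "real (card ?B) * real N ^ m \<le> real N * real ((2 * N) choose m) * card F"
    by (simp only: of_nat_mult[symmetric] of_nat_power[symmetric] of_nat_le_iff)
  also have "\<dots> \<le> real N * ((2 * real N) ^ m / fact m) * card F"
    using binomial_le_power_div_fact[of "2 * N" m] by (intro mult_right_mono mult_left_mono) auto
  also have "\<dots> = real N * (2 ^ m / fact m) * card F * real N ^ m"
    by (simp add: power_mult_distrib)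
  also have "\<dots> \<le> real N * (16 / 2 ^ m) * card F * real N ^ m"
    using power_two_div_fact_le[of m] by (intro mult_right_mono mult_left_mono) auto
  also have "\<dots> = 16 * real N / 2 ^ m * card F * real N ^ m"
    by simp
  finally show ?thesis
    by (rule mult_right_le_imp_le) (use assms in simp)
qed

lemma card_many_collisions_2N:
  fixes N :: nat
  assumes N: "N > 0"
  defines "F \<equiv> PiE {0..<2*N} (\<lambda>_. {0..<N})"
  shows "real (card {f \<in> F. 5 * real N \<le> collisions {0..<2*N} f}) \<le> 8 * card F / N"
proof -
  interpret balls_in_bins "{0..<2*N}" "{0..<N}"
    by unfold_locales simp_all
  define M where "M = real (card (off_diagonal {0..<2*N}))"
  have M: "M \<le> 4 * real N ^ 2"
    using card_off_diagonal_le[of "{0..<2*N}"] unfolding M_def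
    by (simp add: power_mult_distrib) (metis of_nat_le_iff of_nat_mult of_nat_numeral of_nat_power)
  then have "M / N + N \<le> 5 * N"
    using N by (simp add: divide_le_eq power2_eq_square)
  then have "{f \<in> F. 5 * real N \<le> collisions {0..<2*N} f} \<subseteq> {f \<in> F. M / N + N \<le> collisions {0..<2*N} f}"
    by (auto intro: order_trans)
  then have "real (card {f \<in> F. 5 * real N \<le> collisions {0..<2*N} f}) * real N ^ 2
      \<le> real (card {f \<in> F. M / N + N \<le> collisions {0..<2*N} f}) * real N ^ 2"
    using finite_placements unfolding F_def by (intro mult_right_mono of_nat_mono card_mono) auto
  also have "\<dots> \<le> (\<Sum>f\<in>F. (collisions {0..<2*N} f - M / N) ^ 2)"
    using finite_placements unfolding F_def by (intro card_upper_deviation_le) auto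
  also have "\<dots> \<le> 2 * M * card F / N"
    using sum_collisions_deviation_squared N unfolding F_def M_def by simp
  also have "\<dots> \<le> 2 * (4 * real N ^ 2) * card F / N"
    using M by (intro divide_right_mono mult_right_mono mult_left_mono) auto
  also have "\<dots> = 8 * card F / N * real N ^ 2"
    by (simp add: field_simps)
  finally show ?thesis
    by (rule mult_right_le_imp_le) (use N in simp)
qed

lemma prob_multinomial_2N:
  "measure_pmf.prob (multinomial_2N N) S
    = card {f \<in> PiE {0..<2*N} (\<lambda>_. {0..<N}). occupancy {0..<2*N} f \<in> S}
      / card (PiE {0..<2*N} (\<lambda>_. {0..<N}))"
proof -
  have "PiE {0..<2*N} (\<lambda>_. {0..<N}) \<noteq> {}" "finite (PiE {0..<2*N} (\<lambda>_. {0..<N}))"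
    by (auto simp: PiE_eq_empty_iff finite_PiE)
  then show ?thesis
    unfolding multinomial_2N_def measure_map_pmf
    by (subst measure_pmf_of_set) (auto simp: occupancy_def[abs_def] vimage_def Int_def conj_commute)
qed

lemma sum_square_xi_eq:
  "(\<Sum>k\<in>Y ` {0..<N}. real k ^ 2 * xi N Y k) = (\<Sum>i\<in>{0..<N}. real (Y i) ^ 2) / N"
proof -
  have "(\<Sum>i\<in>{0..<N}. real (Y i) ^ 2) = (\<Sum>k\<in>Y ` {0..<N}. \<Sum>i\<in>{i \<in> {0..<N}. Y i = k}. real (Y i) ^ 2)"
    by (rule sum.image_gen) simp
  also have "\<dots> = (\<Sum>k\<in>Y ` {0..<N}. real k ^ 2 * card {i \<in> {0..<N}. Y i = k})"
    by (intro sum.cong refl) simp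
  finally show ?thesis
    by (simp add: xi_def sum_divide_distrib)
qed

lemma properI:
  fixes Y :: "nat \<Rightarrow> nat" and K :: real
  assumes N: "N > 0"
    and squares: "(\<Sum>i\<in>{0..<N}. real (Y i) ^ 2) \<le> K * N"
    and bounded: "\<And>i. i < N \<Longrightarrow> real (Y i) \<le> real N powr (1/12) / ln (real N)"
    and two: "2 \<le> real N powr (1/12) / ln (real N)"
  shows "proper K N Y (\<lambda>_. 2)"
proof -
  let ?S = "Y ` {0..<N} \<union> (\<lambda>_. 2::nat) ` {0..<N} \<union> {0}"
  have "Max ?S \<in> ?S"
    by (intro Max_in) auto
  then have "real (maxdeg N Y (\<lambda>_. 2)) \<le> real N powr (1/12) / ln (real N)"
    unfolding maxdeg_def using bounded two by auto
  moreover have "(\<Sum>k\<in>Y ` {0..<N}. real k ^ 2 * xi N Y k) \<le> K"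
    using squares N by (simp add: sum_square_xi_eq divide_le_eq)
  ultimately show ?thesis
    by (simp add: proper_def)
qed

lemma proper_occupancy:
  fixes N :: nat
  defines "x \<equiv> real N powr (1/12) / ln (real N)"
  assumes N: "N > 0" and x: "2 \<le> x" and f: "f \<in> PiE {0..<2*N} (\<lambda>_. {0..<N})"
    and few_collisions: "collisions {0..<2*N} f < 5 * real N"
    and small_bins: "\<And>i. i < N \<Longrightarrow> occupancy {0..<2*N} f i \<le> nat \<lfloor>x\<rfloor>"
  shows "proper 7 N (occupancy {0..<2*N} f) (\<lambda>_. 2)"
proof (rule properI[OF N])
  interpret balls_in_bins "{0..<2*N}" "{0..<N}"
    by unfold_locales simp_all
  have "(\<Sum>i\<in>{0..<N}. real (occupancy {0..<2*N} f i) ^ 2) = 2 * N + collisions {0..<2*N} f"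
    using f by (simp add: sum_occupancy_squared)
  also have "\<dots> \<le> 7 * real N"
    using few_collisions by simp
  finally show "(\<Sum>i\<in>{0..<N}. real (occupancy {0..<2*N} f i) ^ 2) \<le> 7 * real N" .
  show "real (occupancy {0..<2*N} f i) \<le> real N powr (1/12) / ln (real N)" if "i < N" for i
    using small_bins[OF that] x unfolding x_def by linarith
qed (use x in \<open>simp add: x_def\<close>)

lemma prob_proper_lower_bound:
  fixes N :: nat
  defines "x \<equiv> real N powr (1/12) / ln (real N)"
  assumes N: "N > 0" and x: "2 \<le> x"
  shows "1 - 8 / real N - 16 * real N / 2 powr x
    \<le> measure_pmf.prob (multinomial_2N N) {Y. proper 7 N Y (\<lambda>_. 2)}"
proof -
  interpret balls_in_bins "{0..<2*N}" "{0..<N}"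
    by unfold_locales simp_all
  define m where "m = nat \<lfloor>x\<rfloor> + 1"
  define c where "c = real (card placements)"
  let ?G = "{f \<in> placements. occupancy {0..<2*N} f \<in> {Y. proper 7 N Y (\<lambda>_. 2)}}"
  let ?B1 = "{f \<in> placements. 5 * real N \<le> collisions {0..<2*N} f}"
  let ?B2 = "{f \<in> placements. \<exists>i\<in>{0..<N}. m \<le> occupancy {0..<2*N} f i}"
  have c: "c > 0"
    using N by (simp add: c_def card_placements)
  have "placements - ?B1 - ?B2 \<subseteq> ?G"
    using proper_occupancy[OF N x[unfolded x_def]]
    by (auto simp: m_def x_def not_le less_Suc_eq_le)
  then have "card placements \<le> card (?G \<union> ?B1 \<union> ?B2)"
    using finite_placements by (intro card_mono) auto
  also have "\<dots> \<le> card ?G + card ?B1 + card ?B2"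
    by (meson card_Un_le add_right_mono order_trans)
  finally have "c - card ?B1 - card ?B2 \<le> card ?G"
    unfolding c_def by linarith
  moreover have "card ?B1 \<le> 8 * c / real N"
    using card_many_collisions_2N[OF N] by (simp add: c_def)
  moreover have "card ?B2 \<le> 16 * real N / 2 powr x * c"
  proof -
    have "x \<le> real m"
      using x unfolding m_def by linarith
    then have "16 * real N / 2 ^ m \<le> 16 * real N / 2 powr x"
      by (intro divide_left_mono) (auto simp: powr_realpow[symmetric])
    then show ?thesis
      using card_overfull_bin_2N[OF N, of m] c unfolding c_def by (meson mult_right_mono less_imp_le order_trans)
  qed
  ultimately have "(1 - 8 / real N - 16 * real N / 2 powr x) * c \<le> card ?G"
    by (simp add: algebra_simps)
  then show ?thesis
    using c by (simp add: prob_multinomial_2N c_def le_divide_eq)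
qed

theorem lemma4p2:
  shows "\<exists>K>0. (\<lambda>N. measure_pmf.prob (multinomial_2N N)
                      {Y. proper K N Y (\<lambda>_. 2)}) \<longlonglongrightarrow> 1"
proof (intro exI[of _ 7] conjI)
  let ?x = "\<lambda>N. real N powr (1/12) / ln (real N)"
  let ?p = "\<lambda>N. measure_pmf.prob (multinomial_2N N) {Y. proper 7 N Y (\<lambda>_. 2)}"
  have lower: "(\<lambda>N. 1 - 8 / real N - 16 * real N / 2 powr ?x N) \<longlonglongrightarrow> 1"
    by real_asymp
  have "eventually (\<lambda>N. 2 \<le> ?x N) sequentially"
    by real_asymp
  then have "eventually (\<lambda>N. 1 - 8 / real N - 16 * real N / 2 powr ?x N \<le> ?p N) sequentially"
    using eventually_gt_at_top[of 0] by eventually_elim (rule prob_proper_lower_bound)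
  moreover have "eventually (\<lambda>N. ?p N \<le> 1) sequentially"
    by (simp add: measure_pmf.prob_le_1)
  ultimately show "?p \<longlonglongrightarrow> 1"
    using lower tendsto_const by (rule tendsto_sandwich)
qed simp

end
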